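(* Let $\mathcal{R}=\{z\in\mathbb{C}:\Re(z)>0\}$ and let $\Phi:\mathcal{R}\to\mathbb{C}$ be analytic and satisfy: (a) for all $0<a<b<\infty$, $\lim_{y\to\pm\infty} e^{-\pi|y|}\int_a^b\left|\frac{\Phi(x+iy)}{x+iy}\right|\mathrm{d}x=0$; (b) for every $\eta>0$, $\sup_{x\ge\eta}\int_{-\infty}^\infty\left|\frac{\Phi(x+iy)}{x+iy}\right|e^{-\pi|y|}\,\mathrm{d}y<\infty$; (c) $\lim_{x\to\infty}\int_{-\infty}^\infty\left|\frac{\Phi(x+iy)}{x+iy}\right|e^{-\pi|y|}\,\mathrm{d}y=0$. Let $\beta>0$ with $\beta-\frac12\notin\mathbb{Z}$, and for $z$ with $|\Re(z)|\ne\beta$ define $$I(\beta,\Phi;z)=\frac{1}{2\pi i}\int_{\beta-i\infty}^{\beta+i\infty}\left(\frac{\cos\pi z}{\cos\pi w}\right)\left(\frac{2w}{z^2-w^2}\right)\Phi(w)\,\mathrm{d}w,$$ and $B(\beta,\Phi)=\frac{2}{\pi}\int_{-\infty}^{\infty}\left|\frac{\Phi(\beta+iv)}{\beta+iv}\right|e^{-\pi|v|}\,\mathrm{d}v$. Then for every $z=x+iy$ with $|x|\ne\beta$, $$|I(\beta,\Phi;z)|\le B(\beta,\Phi)\,|\sec\pi\beta|\left(1+\frac{|z|}{\bigl||x|-\beta\bigr|}\right)e^{\pi|y|}.$$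
   Context: Under the hypotheses the integrand defining $I(\beta,\Phi;z)$ is integrable along the line $\Re(w)=\beta$. *)

theory Defs
  imports "HOL-Analysis.Analysis"
begin

definition right_half_plane :: "complex set" where
  "right_half_plane = {z. Re z > 0}"

text \<open>I(beta, Phi; z) = 1/(2 pi i) times the integral over the vertical line Re w = beta,
  parametrised as w = beta + i t, dw = i dt, t ranging over the reals (Lebesgue measure).\<close>
definition I_int :: "real \<Rightarrow> (complex \<Rightarrow> complex) \<Rightarrow> complex \<Rightarrow> complex" where
  "I_int \<beta> \<Phi> z =
     1 / (2 * of_real pi * \<i>) *
     (LINT t|lborel.
        (let w = Complex \<beta> t in
           (cos (of_real pi * z) / cos (of_real pi * w)) * (2 * w / (z\<^sup>2 - w\<^sup>2)) * \<Phi> w * \<i>))"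

definition B_const :: "real \<Rightarrow> (complex \<Rightarrow> complex) \<Rightarrow> real" where
  "B_const \<beta> \<Phi> =
     2 / pi * (LINT v|lborel. cmod (\<Phi> (Complex \<beta> v) / Complex \<beta> v) * exp (- pi * \<bar>v\<bar>))"

end

theory Submission
  imports Defs
begin

text \<open>On the line \<open>w = \<beta> + it\<close> the integrand is estimated pointwise:
  \<open>|cos \<pi>z| \<le> e\<^bsup>\<pi>|Im z|\<^esup>\<close>, \<open>|cos \<pi>w| \<ge> |cos \<pi>\<beta>| e\<^bsup>\<pi>|t|\<^esup>/2\<close>, and
  \<open>|2w\<^sup>2/(z\<^sup>2 - w\<^sup>2)| \<le> 2(1 + |z|/||Re z| - \<beta>|)\<close> since \<open>|z - w|\<close> and \<open>|z + w|\<close> are both at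
  least \<open>||Re z| - \<beta>|\<close>. Integrating against \<open>|\<Phi>(w)/w| e\<^bsup>-\<pi>|t|\<^esup>\<close>, which is integrable by
  hypothesis (b) at \<open>x = \<beta>\<close>, gives the bound.\<close>

lemma norm_cos_ge_half_exp_abs_Im:
  fixes w :: complex
  shows "\<bar>cos (Re w)\<bar> * exp \<bar>Im w\<bar> / 2 \<le> norm (cos w)"
proof -
  define u where "u = exp (Im w)"
  have u_pos: "u > 0" by (simp add: u_def)
  have "exp \<bar>Im w\<bar> \<le> u + inverse u"
    using u_pos by (cases "Im w \<ge> 0") (simp_all add: u_def exp_minus)
  then have "exp \<bar>Im w\<bar> ^ 2 \<le> (u + inverse u) ^ 2"
    by (intro power_mono) auto
  also have "\<dots> = 4 + (u - inverse u) ^ 2"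
    using u_pos by (simp add: power2_eq_square field_simps)
  finally have exp_sq: "exp \<bar>Im w\<bar> ^ 2 / 4 \<le> 1 + (u - inverse u) ^ 2 / 4"
    by simp
  have cos_sq: "cos (Re w) ^ 2 \<le> 1"
    by (simp add: abs_square_le_1)
  have "(\<bar>cos (Re w)\<bar> * exp \<bar>Im w\<bar> / 2) ^ 2 = cos (Re w) ^ 2 * (exp \<bar>Im w\<bar> ^ 2 / 4)"
    by (simp add: power_mult_distrib power_divide)
  also have "\<dots> \<le> cos (Re w) ^ 2 * (1 + (u - inverse u) ^ 2 / 4)"
    using exp_sq by (intro mult_left_mono) auto
  also have "\<dots> \<le> cos (Re w) ^ 2 + (u - inverse u) ^ 2 / 4"
    using mult_right_mono[OF cos_sq, of "(u - inverse u) ^ 2 / 4"] by (simp add: algebra_simps)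
  also have "\<dots> = norm (cos w) ^ 2"
    by (simp add: norm_cos_squared u_def)
  finally show ?thesis
    by (rule power2_le_imp_le) simp
qed

lemma cos_pi_times_neq_0:
  fixes x :: real
  assumes "x - 1/2 \<notin> \<int>"
  shows "cos (pi * x) \<noteq> 0"
proof
  assume "cos (pi * x) = 0"
  then obtain n :: int where "pi * x = n * pi + pi / 2"
    by (auto simp: cos_zero_iff_int2)
  then have "pi * x = pi * (of_int n + 1/2)"
    by (simp add: algebra_simps)
  then have "x - 1/2 = of_int n"
    using pi_gt_zero by (metis diff_add_cancel mult_cancel_left less_irrefl add_diff_cancel_right')
  with assms show False
    by (metis Ints_of_int)
qed

lemma norm_double_square_div_diff_squares_le:
  fixes z w :: complex and d :: real
  assumes "d > 0" "d \<le> \<bar>Re z - Re w\<bar>" "d \<le> \<bar>Re z + Re w\<bar>"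
  shows "norm (2 * w * w / (z\<^sup>2 - w\<^sup>2)) \<le> 2 * (1 + norm z / d)"
proof -
  have dist_minus: "d \<le> norm (z - w)" and dist_plus: "d \<le> norm (z + w)"
    using assms abs_Re_le_cmod[of "z - w"] abs_Re_le_cmod[of "z + w"] by auto
  then have "z - w \<noteq> 0" "z + w \<noteq> 0"
    using assms(1) by auto
  then have "2 * w * w / (z\<^sup>2 - w\<^sup>2) = -2 + z / (z - w) + z / (z + w)"
    by (simp add: power2_eq_square field_simps)
  also have "norm \<dots> \<le> 2 + norm z / norm (z - w) + norm z / norm (z + w)"
    using norm_triangle_ineq[of "-2 + z / (z - w)" "z / (z + w)"] norm_triangle_ineq[of "-2" "z / (z - w)"]
    by (simp add: norm_divide)
  also have "\<dots> \<le> 2 + norm z / d + norm z / d"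
    using assms(1) dist_minus dist_plus
    by (intro add_mono divide_left_mono) (auto intro!: mult_pos_pos)
  finally show ?thesis
    by simp
qed

text \<open>No integrability of \<open>f\<close> is assumed: if it fails, the integral of \<open>f\<close> is \<open>0\<close>.\<close>

lemma norm_integral_le_mult_integral:
  fixes f :: "real \<Rightarrow> 'a::{banach,second_countable_topology}"
  assumes "integrable lborel g" "\<And>t. g t \<ge> 0" "K \<ge> 0" "\<And>t. norm (f t) \<le> K * g t"
  shows "norm (LINT t|lborel. f t) \<le> K * (LINT t|lborel. g t)"
proof (cases "integrable lborel f")
  case True
  then have "norm (LINT t|lborel. f t) \<le> (LINT t|lborel. K * g t)"
    by (rule Bochner_Integration.integral_norm_bound_integral) (use True assms in auto)
  then show ?thesis
    by simp
next
  case False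
  then show ?thesis
    using assms by (simp add: not_integrable_integral_eq integral_nonneg_AE)
qed

lemma integrable_line_weight:
  fixes \<Phi> :: "complex \<Rightarrow> complex" and \<beta> :: real
  assumes "continuous_on right_half_plane \<Phi>" "\<beta> > 0"
    and "(\<integral>\<^sup>+ v. ennreal (cmod (\<Phi> (Complex \<beta> v) / Complex \<beta> v) * exp (- pi * \<bar>v\<bar>)) \<partial>lborel) < \<infinity>"
  shows "integrable lborel (\<lambda>v. cmod (\<Phi> (Complex \<beta> v) / Complex \<beta> v) * exp (- pi * \<bar>v\<bar>))"
proof (subst integrable_iff_bounded, intro conjI)
  have line: "continuous_on UNIV (Complex \<beta>)"
    unfolding Complex_eq by (intro continuous_intros)
  have "continuous_on UNIV (\<lambda>v. \<Phi> (Complex \<beta> v))"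
    using assms(2) by (intro continuous_on_compose2[OF assms(1) line]) (auto simp: right_half_plane_def)
  then have "continuous_on UNIV (\<lambda>v. cmod (\<Phi> (Complex \<beta> v) / Complex \<beta> v) * exp (- pi * \<bar>v\<bar>))"
    using assms(2) by (intro continuous_intros line) (auto simp: complex_eq_iff)
  then show "(\<lambda>v. cmod (\<Phi> (Complex \<beta> v) / Complex \<beta> v) * exp (- pi * \<bar>v\<bar>)) \<in> borel_measurable lborel"
    by (simp add: borel_measurable_continuous_onI)
  show "(\<integral>\<^sup>+ v. ennreal (norm (cmod (\<Phi> (Complex \<beta> v) / Complex \<beta> v) * exp (- pi * \<bar>v\<bar>))) \<partial>lborel) < \<infinity>"
    using assms(3) by simp
qed

lemma norm_cos_kernel_le:
  fixes z w :: complex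
  assumes "Re w > 0" "cos (pi * Re w) \<noteq> 0" "\<bar>Re z\<bar> \<noteq> Re w"
  shows "norm (cos (pi * z) / cos (pi * w) * (2 * w * w / (z\<^sup>2 - w\<^sup>2)))
    \<le> 4 * \<bar>1 / cos (pi * Re w)\<bar> * (1 + norm z / \<bar>\<bar>Re z\<bar> - Re w\<bar>) * exp (pi * \<bar>Im z\<bar>)
        * exp (- pi * \<bar>Im w\<bar>)"
proof -
  have num: "norm (cos (pi * z)) \<le> exp (pi * \<bar>Im z\<bar>)"
    using cmod_cos_le_exp[of 1 "pi * z"] by (simp add: abs_mult)
  have lower: "\<bar>cos (pi * Re w)\<bar> * exp (pi * \<bar>Im w\<bar>) / 2 \<le> norm (cos (pi * w))"
    using norm_cos_ge_half_exp_abs_Im[of "pi * w"] by (simp add: abs_mult)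
  have "1 / norm (cos (pi * w)) \<le> 1 / (\<bar>cos (pi * Re w)\<bar> * exp (pi * \<bar>Im w\<bar>) / 2)"
    using lower assms(2) by (intro divide_left_mono) (auto intro!: mult_pos_pos order.strict_trans2[OF _ lower])
  also have "\<dots> = 2 * \<bar>1 / cos (pi * Re w)\<bar> * exp (- pi * \<bar>Im w\<bar>)"
    by (simp add: exp_minus field_simps abs_divide)
  finally have den: "1 / norm (cos (pi * w)) \<le> 2 * \<bar>1 / cos (pi * Re w)\<bar> * exp (- pi * \<bar>Im w\<bar>)" .
  have rat: "norm (2 * w * w / (z\<^sup>2 - w\<^sup>2)) \<le> 2 * (1 + norm z / \<bar>\<bar>Re z\<bar> - Re w\<bar>)"
    using assms(1,3) by (intro norm_double_square_div_diff_squares_le) (auto simp: abs_if)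
  have "norm (cos (pi * z) / cos (pi * w) * (2 * w * w / (z\<^sup>2 - w\<^sup>2)))
      = norm (cos (pi * z)) * (1 / norm (cos (pi * w))) * norm (2 * w * w / (z\<^sup>2 - w\<^sup>2))"
    by (simp add: norm_mult norm_divide)
  also have "\<dots> \<le> exp (pi * \<bar>Im z\<bar>) * (2 * \<bar>1 / cos (pi * Re w)\<bar> * exp (- pi * \<bar>Im w\<bar>))
      * (2 * (1 + norm z / \<bar>\<bar>Re z\<bar> - Re w\<bar>))"
    using num den rat by (intro mult_mono) auto
  also have "\<dots> = 4 * \<bar>1 / cos (pi * Re w)\<bar> * (1 + norm z / \<bar>\<bar>Re z\<bar> - Re w\<bar>) * exp (pi * \<bar>Im z\<bar>)
        * exp (- pi * \<bar>Im w\<bar>)"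
    by (simp only: ac_simps)
  finally show ?thesis .
qed

lemma norm_line_integrand_le:
  fixes \<Phi> :: "complex \<Rightarrow> complex" and \<beta> t :: real and z :: complex
  assumes "\<beta> > 0" "cos (pi * \<beta>) \<noteq> 0" "\<bar>Re z\<bar> \<noteq> \<beta>"
  shows "norm (let w = Complex \<beta> t in
      cos (pi * z) / cos (pi * w) * (2 * w / (z\<^sup>2 - w\<^sup>2)) * \<Phi> w * \<i>)
    \<le> 4 * \<bar>1 / cos (pi * \<beta>)\<bar> * (1 + cmod z / \<bar>\<bar>Re z\<bar> - \<beta>\<bar>) * exp (pi * \<bar>Im z\<bar>)
        * (cmod (\<Phi> (Complex \<beta> t) / Complex \<beta> t) * exp (- pi * \<bar>t\<bar>))"
proof -
  define w where "w = Complex \<beta> t"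
  have w: "Re w = \<beta>" "Im w = t" "w \<noteq> 0"
    using assms(1) by (simp_all add: w_def complex_eq_iff)
  have "norm (cos (pi * z) / cos (pi * w) * (2 * w / (z\<^sup>2 - w\<^sup>2)) * \<Phi> w * \<i>)
      = norm (cos (pi * z) / cos (pi * w) * (2 * w * w / (z\<^sup>2 - w\<^sup>2))) * norm (\<Phi> w / w)"
    using w(3) by (simp add: norm_mult norm_divide)
  also have "\<dots> \<le> 4 * \<bar>1 / cos (pi * \<beta>)\<bar> * (1 + cmod z / \<bar>\<bar>Re z\<bar> - \<beta>\<bar>) * exp (pi * \<bar>Im z\<bar>)
        * exp (- pi * \<bar>t\<bar>) * norm (\<Phi> w / w)"
    using norm_cos_kernel_le[of w z] assms by (intro mult_right_mono) (simp_all add: w)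
  finally show ?thesis
    by (simp only: w_def Let_def mult_ac)
qed

theorem lemma3p2:
  fixes \<Phi> :: "complex \<Rightarrow> complex" and \<beta> :: real and z :: complex
  assumes analytic: "\<Phi> analytic_on right_half_plane"
    and cond_a: "\<And>a b. 0 < a \<Longrightarrow> a < b \<Longrightarrow>
        ((\<lambda>y. exp (- pi * \<bar>y\<bar>) * (LBINT x:{a..b}. cmod (\<Phi> (Complex x y) / Complex x y)))
           \<longlongrightarrow> 0) at_top \<and>
        ((\<lambda>y. exp (- pi * \<bar>y\<bar>) * (LBINT x:{a..b}. cmod (\<Phi> (Complex x y) / Complex x y)))
           \<longlongrightarrow> 0) at_bot"
    and cond_b: "\<And>\<eta>. 0 < \<eta> \<Longrightarrow>
        (SUP x\<in>{\<eta>..}. \<integral>\<^sup>+ y. ennreal (cmod (\<Phi> (Complex x y) / Complex x y) * exp (- pi * \<bar>y\<bar>)) \<partial>lborel) < \<infinity>"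
    and cond_c: "((\<lambda>x. \<integral>\<^sup>+ y. ennreal (cmod (\<Phi> (Complex x y) / Complex x y) * exp (- pi * \<bar>y\<bar>)) \<partial>lborel)
           \<longlongrightarrow> 0) at_top"
    and beta_pos: "\<beta> > 0"
    and beta_half: "\<beta> - 1/2 \<notin> \<int>"
    and z_off: "\<bar>Re z\<bar> \<noteq> \<beta>"
  shows "cmod (I_int \<beta> \<Phi> z) \<le>
           B_const \<beta> \<Phi> * \<bar>1 / cos (pi * \<beta>)\<bar> *
           (1 + cmod z / \<bar>\<bar>Re z\<bar> - \<beta>\<bar>) * exp (pi * \<bar>Im z\<bar>)"
proof -
  let ?h = "\<lambda>v. cmod (\<Phi> (Complex \<beta> v) / Complex \<beta> v) * exp (- pi * \<bar>v\<bar>)"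
  define K where "K = 4 * \<bar>1 / cos (pi * \<beta>)\<bar> * (1 + cmod z / \<bar>\<bar>Re z\<bar> - \<beta>\<bar>) * exp (pi * \<bar>Im z\<bar>)"
  have cos_ne: "cos (pi * \<beta>) \<noteq> 0"
    using beta_half by (rule cos_pi_times_neq_0)
  have "(\<integral>\<^sup>+ v. ennreal (?h v) \<partial>lborel) < \<infinity>"
    using cond_b[OF beta_pos] by (rule order.strict_trans1[rotated]) (rule SUP_upper, simp)
  then have h_int: "integrable lborel ?h"
    using analytic beta_pos
    by (intro integrable_line_weight holomorphic_on_imp_continuous_on analytic_imp_holomorphic)
  have "cmod (I_int \<beta> \<Phi> z) = norm (LINT t|lborel. (let w = Complex \<beta> t in
      cos (pi * z) / cos (pi * w) * (2 * w / (z\<^sup>2 - w\<^sup>2)) * \<Phi> w * \<i>)) / (2 * pi)"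
    by (simp add: I_int_def norm_mult norm_divide)
  also have "\<dots> \<le> K * (LINT v|lborel. ?h v) / (2 * pi)"
    using h_int norm_line_integrand_le[OF beta_pos cos_ne z_off]
    by (intro divide_right_mono norm_integral_le_mult_integral) (auto simp: K_def)
  also have "\<dots> = B_const \<beta> \<Phi> * \<bar>1 / cos (pi * \<beta>)\<bar> *
      (1 + cmod z / \<bar>\<bar>Re z\<bar> - \<beta>\<bar>) * exp (pi * \<bar>Im z\<bar>)"
    using cos_ne z_off by (simp add: K_def B_const_def field_simps)
  finally show ?thesis .
qed

end
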